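(* In the multiple zeta setting, $\mathfrak{h}^0[t]$ is closed under the $t$-harmonic product $\star_t$, and $Z^t=Z\circ S^t\colon(\mathfrak{h}^0[t],\star_t)\to\mathbb{R}[t]$ is a $\mathbb{Q}[t]$-algebra homomorphism.
   Context: Multiple zeta setting: $A=\{z_k\mid k=1,2,\ldots\}$, $\mathfrak{h}^1$ is the non-commutative polynomial algebra over $\mathbb{Q}$ in the letters $z_k$ (words are finite sequences of letters, $1$ the empty word), and $\mathfrak{z}$ its $\mathbb{Q}$-span of letters with product $z_k\circ z_l=z_{k+l}$, acting on $\mathfrak{h}^1$ by $a\circ 1=0$, $a\circ(bw)=(a\circ b)w$ ($a,b$ letters, $w$ a word), extended bilinearly. Let $\mathfrak{h}^0=\mathbb{Q}\oplus\bigoplus_{k\geq 2}z_k\mathfrak{h}^1$. Let $Z\colon\mathfrak{h}^0[t]\to\mathbb{R}[t]$ be the $\mathbb{Q}[t]$-linear map with $Z(1)=1$ and $Z(z_{k_1}\cdots z_{k_n})=\zeta(k_1,\ldots,k_n)=\sum_{m_1>\cdots>m_n>0}m_1^{-k_1}\cdots m_n^{-k_n}$ ($k_1\ge2$). The $\mathbb{Q}[t]$-linear operator $S^t$ on $\mathfrak{h}^1[t]$ is given by $S^t(1)=1$, $S^t(aw)=aS^t(w)+t\,a\circ S^t(w)$. The $t$-harmonic product $\star_t$ on $\mathfrak{h}^1[t]$ is the $\mathbb{Q}[t]$-bilinear product with $1\star_t w=w\star_t 1=w$ and $(aw)\star_t(bw')=a(w\star_t bw')+b(aw\star_t w')+(1-2t)(a\circ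 b)(w\star_t w')+(t^2-t)(a\circ b)\circ(w\star_t w')$ for letters $a,b$ and words $w,w'$. *)

theory Defs
  imports "HOL-Analysis.Analysis" "HOL-Computational_Algebra.Polynomial"
begin

text \<open>Words in the letters z_k (k >= 1) are represented by lists of naturals
(the list [k1,...,kn] is the word z_k1 ... z_kn; the empty list is the empty word 1).
An element of h^1[t] is a finitely supported function from words to Q[t]
(rat poly), supported on words whose letters are all >= 1.\<close>

type_synonym elem = "nat list \<Rightarrow> rat poly"

definition supp :: "elem \<Rightarrow> nat list set" where
  "supp x = {w. x w \<noteq> 0}"

definition h1t :: "elem set" where
  "h1t = {x. finite (supp x) \<and> (\<forall>w\<in>supp x. \<forall>k\<in>set w. 1 \<le> k)}"

definition h0t :: "elem set" where
  "h0t = {x. x \<in> h1t \<and> (\<forall>w\<in>supp x. w = [] \<or> 2 \<le> hd w)}"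

definition wd :: "nat list \<Rightarrow> elem" where
  "wd w = (\<lambda>v. if v = w then 1 else 0)"

definition lin :: "(nat list \<Rightarrow> elem) \<Rightarrow> elem \<Rightarrow> elem" where
  "lin f x = (\<lambda>v. \<Sum>w\<in>supp x. x w * f w v)"

definition tt :: "rat poly" where
  "tt = [:0, 1:]"

definition scal :: "rat poly \<Rightarrow> elem \<Rightarrow> elem" where
  "scal c x = (\<lambda>v. c * x v)"

definition addf :: "elem \<Rightarrow> elem \<Rightarrow> elem" where
  "addf x y = (\<lambda>v. x v + y v)"

definition lmul :: "nat \<Rightarrow> elem \<Rightarrow> elem" where
  "lmul a x = lin (\<lambda>w. wd (a # w)) x"

fun circw :: "nat \<Rightarrow> nat list \<Rightarrow> elem" where
  "circw c [] = (\<lambda>_. 0)"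
| "circw c (b # u) = wd ((c + b) # u)"

definition circ :: "nat \<Rightarrow> elem \<Rightarrow> elem" where
  "circ c x = lin (circw c) x"

fun Sw :: "nat list \<Rightarrow> elem" where
  "Sw [] = wd []"
| "Sw (a # w) = addf (lmul a (Sw w)) (scal tt (circ a (Sw w)))"

definition St :: "elem \<Rightarrow> elem" where
  "St x = lin Sw x"

fun starw :: "nat list \<Rightarrow> nat list \<Rightarrow> elem" where
  "starw [] w' = wd w'"
| "starw (a # w) [] = wd (a # w)"
| "starw (a # w) (b # w') =
     addf (addf (lmul a (starw w (b # w'))) (lmul b (starw (a # w) w')))
          (addf (scal (1 - 2 * tt) (lmul (a + b) (starw w w')))
                (scal (tt ^ 2 - tt) (circ (a + b) (starw w w'))))"

definition starT :: "elem \<Rightarrow> elem \<Rightarrow> elem" where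
  "starT x y = (\<lambda>v. \<Sum>w\<in>supp x. \<Sum>w'\<in>supp y. x w * y w' * starw w w' v)"

definition mzv :: "nat list \<Rightarrow> real" where
  "mzv ks = infsum (\<lambda>ms. \<Prod>i<length ks. 1 / (real (ms ! i) ^ (ks ! i)))
     {ms. length ms = length ks \<and> sorted_wrt (>) ms \<and> (\<forall>m\<in>set ms. 0 < m)}"

definition Z :: "elem \<Rightarrow> real poly" where
  "Z x = (\<Sum>w\<in>supp x. smult (mzv w) (map_poly of_rat (x w)))"

definition Zt :: "elem \<Rightarrow> real poly" where
  "Zt x = Z (St x)"

end

theory Submission
  imports Defs
begin

(* Closure of h^0[t] under S^t and under the t-harmonic product is a matter of
   supports: both only produce words with positive letters whose first letter is
   at least the first letter of one of the inputs.

   The homomorphism property is first proved for truncated multiple zeta values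
   zeta_N(k1,...,kn), the sum over N >= m1 > ... > mn > 0.  They satisfy
   zeta_{N+1}(a w) = zeta_N(a w) + (N+1)^(-a) zeta_N(w); general "increment" lemmas
   for linear functionals carry this recursion through S^t to truncated Z^t on
   words.  Feeding it into the recursive definition of the t-harmonic product, a
   double induction (on N, then along the product) shows that truncated Z^t is
   multiplicative on words.  On admissible words zeta_N is increasing and bounded
   by 2, and its limit is the multiple zeta value; so multiplicativity passes to
   the limit and then extends bilinearly to h^0[t]. *)


definition emb :: "rat poly \<Rightarrow> real poly" where
  "emb = map_poly of_rat"

lemma emb_0 [simp]: "emb 0 = 0"
  by (simp add: emb_def)

lemma emb_1 [simp]: "emb 1 = 1"
  by (simp add: emb_def)

lemma emb_add: "emb (p + q) = emb p + emb q"
  by (rule poly_eqI) (simp add: emb_def coeff_map_poly of_rat_add)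

lemma emb_diff: "emb (p - q) = emb p - emb q"
  by (rule poly_eqI) (simp add: emb_def coeff_map_poly of_rat_diff)

lemma emb_mult: "emb (p * q) = emb p * emb q"
  by (rule poly_eqI) (simp add: emb_def coeff_map_poly coeff_mult of_rat_sum of_rat_mult)

definition tR :: "real poly" where
  "tR = [:0, 1:]"

lemma emb_tt: "emb tt = tR"
  by (simp add: emb_def tt_def tR_def map_poly_pCons)

lemma emb_coefficients:
  "emb (1 - 2 * tt) = 1 - 2 * tR" "emb (tt ^ 2 - tt) = tR ^ 2 - tR"
proof -
  have "emb 2 = 2" by (metis emb_1 emb_add one_add_one)
  then show "emb (1 - 2 * tt) = 1 - 2 * tR" "emb (tt ^ 2 - tt) = tR ^ 2 - tR"
    by (simp_all add: emb_diff emb_mult emb_tt power2_eq_square)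
qed


text \<open>Linear extension of a real-polynomial valued functional g on words to a
  Q[t]-linear map on h^1[t]; Z, Z^t and their truncations are all of this form.\<close>

definition lext :: "(nat list \<Rightarrow> real poly) \<Rightarrow> elem \<Rightarrow> real poly" where
  "lext g x = (\<Sum>w\<in>supp x. emb (x w) * g w)"

lemma lext_superset:
  assumes "finite U" "supp x \<subseteq> U"
  shows "lext g x = (\<Sum>w\<in>U. emb (x w) * g w)"
  unfolding lext_def by (rule sum.mono_neutral_left[OF assms]) (auto simp: supp_def)

lemma supp_wd [simp]: "supp (wd u) = {u}"
  by (auto simp: supp_def wd_def)

lemma supp_zero [simp]: "supp (\<lambda>_. 0) = {}"
  by (simp add: supp_def)

lemma lext_wd [simp]: "lext g (wd u) = g u"
  unfolding lext_def supp_wd by (simp add: wd_def)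

lemma lext_zero [simp]: "lext g (\<lambda>_. 0) = 0"
  by (simp add: lext_def)

lemma lext_cong: "(\<And>w. w \<in> supp x \<Longrightarrow> f w = g w) \<Longrightarrow> lext f x = lext g x"
  by (simp add: lext_def)

lemma lext_fun_add: "lext (\<lambda>w. f w + g w) x = lext f x + lext g x"
  by (simp add: lext_def distrib_left sum.distrib)

lemma lext_fun_diff: "lext (\<lambda>w. f w - g w) x = lext f x - lext g x"
  by (simp add: lext_def right_diff_distrib sum_subtractf)

lemma lext_fun_mult: "lext (\<lambda>w. k * g w) x = k * lext g x"
  by (simp add: lext_def sum_distrib_left mult.left_commute)

lemma lext_fun_zero [simp]: "lext (\<lambda>w. 0) x = 0"
  by (simp add: lext_def)

lemmas lext_fun_linear = lext_fun_add lext_fun_diff lext_fun_mult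

lemma supp_addf: "supp (addf x y) \<subseteq> supp x \<union> supp y"
  by (auto simp: supp_def addf_def)

lemma supp_scal: "supp (scal c x) \<subseteq> supp x"
  by (auto simp: supp_def scal_def)

lemma supp_lin: "supp (lin f x) \<subseteq> (\<Union>w\<in>supp x. supp (f w))"
proof
  fix v assume "v \<in> supp (lin f x)"
  then have "(\<Sum>w\<in>supp x. x w * f w v) \<noteq> 0" by (simp add: supp_def lin_def)
  then obtain w where "w \<in> supp x" "x w * f w v \<noteq> 0" by (meson sum.neutral)
  then show "v \<in> (\<Union>w\<in>supp x. supp (f w))" by (auto simp: supp_def)
qed

lemma finite_supp_addf: "finite (supp x) \<Longrightarrow> finite (supp y) \<Longrightarrow> finite (supp (addf x y))"
  by (meson finite_Un finite_subset supp_addf)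

lemma finite_supp_scal: "finite (supp x) \<Longrightarrow> finite (supp (scal c x))"
  by (meson finite_subset supp_scal)

lemma finite_supp_lin:
  assumes "finite (supp x)" "\<And>w. w \<in> supp x \<Longrightarrow> finite (supp (f w))"
  shows "finite (supp (lin f x))"
  using assms supp_lin by (meson finite_UN_I finite_subset)

lemma lext_addf:
  assumes "finite (supp x)" "finite (supp y)"
  shows "lext g (addf x y) = lext g x + lext g y"
proof -
  let ?U = "supp x \<union> supp y"
  have "lext g (addf x y) = (\<Sum>w\<in>?U. emb (addf x y w) * g w)"
    using assms supp_addf by (intro lext_superset) auto
  also have "\<dots> = (\<Sum>w\<in>?U. emb (x w) * g w) + (\<Sum>w\<in>?U. emb (y w) * g w)"
    by (simp add: addf_def emb_add distrib_right sum.distrib)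
  also have "\<dots> = lext g x + lext g y"
    using assms by (simp add: lext_superset[of ?U x] lext_superset[of ?U y])
  finally show ?thesis .
qed

lemma lext_scal:
  assumes "finite (supp x)"
  shows "lext g (scal c x) = emb c * lext g x"
proof -
  have "lext g (scal c x) = (\<Sum>w\<in>supp x. emb (scal c x w) * g w)"
    using assms supp_scal by (intro lext_superset) auto
  then show ?thesis by (simp add: scal_def emb_mult lext_def sum_distrib_left mult.assoc)
qed

lemma lext_lin:
  assumes "finite (supp x)" "\<And>w. w \<in> supp x \<Longrightarrow> finite (supp (f w))"
  shows "lext g (lin f x) = lext (\<lambda>w. lext g (f w)) x"
proof -
  let ?U = "\<Union>w\<in>supp x. supp (f w)"
  have fU: "finite ?U" using assms by auto
  have emb_lin: "emb (lin f x v) = (\<Sum>w\<in>supp x. emb (x w) * emb (f w v))" for v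
    unfolding lin_def using assms(1)
    by (induction rule: finite_induct) (simp_all add: emb_add emb_mult)
  have "lext g (lin f x) = (\<Sum>v\<in>?U. emb (lin f x v) * g v)"
    using fU supp_lin by (intro lext_superset) auto
  also have "\<dots> = (\<Sum>w\<in>supp x. emb (x w) * (\<Sum>v\<in>?U. emb (f w v) * g v))"
    by (simp add: emb_lin sum_distrib_right sum_distrib_left mult.assoc sum.swap[of _ ?U])
  also have "\<dots> = lext (\<lambda>w. lext g (f w)) x"
    unfolding lext_def[of "\<lambda>w. lext g (f w)"]
    by (rule sum.cong[OF refl], subst lext_superset[OF fU]) auto
  finally show ?thesis .
qed


lemma supp_lmul_mem: "v \<in> supp (lmul a x) \<Longrightarrow> \<exists>u. v = a # u \<and> u \<in> supp x"
  using supp_lin[of "\<lambda>w. wd (a # w)" x] unfolding lmul_def by auto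

lemma supp_circ_mem: "v \<in> supp (circ c x) \<Longrightarrow> \<exists>b u. v = (c + b) # u \<and> b # u \<in> supp x"
proof -
  assume "v \<in> supp (circ c x)"
  then obtain w where "w \<in> supp x" "v \<in> supp (circw c w)"
    using supp_lin[of "circw c" x] unfolding circ_def by auto
  then show ?thesis by (cases w) auto
qed

lemma finite_supp_circw: "finite (supp (circw c w))"
  by (cases w) auto

lemma finite_supp_lmul: "finite (supp x) \<Longrightarrow> finite (supp (lmul a x))"
  unfolding lmul_def by (rule finite_supp_lin) auto

lemma finite_supp_circ: "finite (supp x) \<Longrightarrow> finite (supp (circ a x))"
  unfolding circ_def by (rule finite_supp_lin) (auto simp: finite_supp_circw)

lemmas finite_supps = finite_supp_lmul finite_supp_circ finite_supp_addf finite_supp_scal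

lemma finite_supp_Sw: "finite (supp (Sw w))"
  by (induction w) (auto intro!: finite_supps)

lemma finite_supp_starw: "finite (supp (starw u v))"
  by (induction u v rule: starw.induct) (auto intro!: finite_supps)

lemma supp_starw_cons:
  assumes "p \<in> supp (starw (a # w) (b # w'))"
  shows "(\<exists>u. p = a # u \<and> u \<in> supp (starw w (b # w')))
       \<or> (\<exists>u. p = b # u \<and> u \<in> supp (starw (a # w) w'))
       \<or> (\<exists>u. p = (a + b) # u \<and> u \<in> supp (starw w w'))
       \<or> (\<exists>c u. p = (a + b + c) # u \<and> c # u \<in> supp (starw w w'))"
proof -
  have "p \<in> supp (lmul a (starw w (b # w'))) \<or> p \<in> supp (lmul b (starw (a # w) w'))
      \<or> p \<in> supp (lmul (a + b) (starw w w')) \<or> p \<in> supp (circ (a + b) (starw w w'))"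
    using assms by (auto simp: supp_def addf_def scal_def)
  then show ?thesis by (elim disjE) (blast dest: supp_lmul_mem supp_circ_mem)+
qed


definition pos_letters :: "nat list \<Rightarrow> bool" where
  "pos_letters w = (\<forall>k\<in>set w. 1 \<le> k)"

definition adm :: "nat list \<Rightarrow> bool" where
  "adm w = (pos_letters w \<and> (w = [] \<or> 2 \<le> hd w))"

lemma h0t_iff: "x \<in> h0t \<longleftrightarrow> finite (supp x) \<and> (\<forall>w\<in>supp x. adm w)"
  by (auto simp: h0t_def h1t_def adm_def pos_letters_def)

lemma supp_Sw_cons:
  "v \<in> supp (Sw (a # w)) \<Longrightarrow> v \<in> supp (lmul a (Sw w)) \<or> v \<in> supp (circ a (Sw w))"
  using supp_addf supp_scal by fastforce

lemma Sw_pos_letters: "v \<in> supp (Sw u) \<Longrightarrow> pos_letters u \<Longrightarrow> pos_letters v"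
proof (induction u arbitrary: v)
  case (Cons a w)
  from supp_Sw_cons[OF Cons.prems(1)] show ?case
  proof
    assume "v \<in> supp (lmul a (Sw w))"
    then obtain u where "v = a # u" "u \<in> supp (Sw w)" using supp_lmul_mem by blast
    then show ?thesis using Cons by (auto simp: pos_letters_def)
  next
    assume "v \<in> supp (circ a (Sw w))"
    then obtain b u where "v = (a + b) # u" "b # u \<in> supp (Sw w)" using supp_circ_mem by blast
    then show ?thesis using Cons by (auto simp: pos_letters_def)
  qed
qed simp

lemma Sw_hd: "v \<in> supp (Sw (a # w)) \<Longrightarrow> \<exists>c u. v = c # u \<and> a \<le> c"
  by (drule supp_Sw_cons) (auto dest!: supp_lmul_mem supp_circ_mem)

lemma Sw_adm:
  assumes "adm u" "v \<in> supp (Sw u)"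
  shows "adm v"
proof (cases u)
  case Nil
  then show ?thesis using assms(2) by (simp add: adm_def pos_letters_def)
next
  case (Cons a w)
  then obtain c r where "v = c # r" "a \<le> c" using Sw_hd assms(2) by blast
  then show ?thesis
    using assms Cons Sw_pos_letters[OF assms(2)] by (auto simp: adm_def)
qed

text \<open>The product of words preserves positivity of letters and keeps the first
  letter at least that of one factor, so it preserves admissibility.\<close>

lemma starw_pos_letters:
  "p \<in> supp (starw u v) \<Longrightarrow> pos_letters u \<Longrightarrow> pos_letters v \<Longrightarrow> pos_letters p"
proof (induction u v arbitrary: p rule: starw.induct)
  case (3 a w b w')
  have tails: "pos_letters w" "pos_letters w'"
    using "3.prems" by (simp_all add: pos_letters_def)
  have IH: "pos_letters u"
    if "u \<in> supp (starw w (b # w')) \<or> u \<in> supp (starw (a # w) w') \<or> u \<in> supp (starw w w')" for u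
    using that "3.IH" "3.prems" tails by blast
  from supp_starw_cons[OF "3.prems"(1)] show ?case
  proof (elim disjE exE conjE)
    fix c u assume "p = (a + b + c) # u" "c # u \<in> supp (starw w w')"
    then show ?thesis using IH[of "c # u"] by (simp add: pos_letters_def)
  qed (use IH "3.prems" in \<open>auto simp: pos_letters_def\<close>)
qed simp_all

lemma starw_adm:
  assumes "adm u" "adm v" "p \<in> supp (starw u v)"
  shows "adm p"
proof (cases "u = [] \<or> v = []")
  case True
  then show ?thesis using assms by (cases u) auto
next
  case False
  then obtain a w b w' where uv: "u = a # w" "v = b # w'" by (meson neq_Nil_conv)
  have "\<exists>c r. p = c # r \<and> (a \<le> c \<or> b \<le> c)"
    using supp_starw_cons[OF assms(3)[unfolded uv]] by auto
  moreover have "pos_letters p"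
    using starw_pos_letters assms by (auto simp: adm_def)
  ultimately show ?thesis
    using assms(1,2) uv by (auto simp: adm_def)
qed

lemma St_h0t:
  assumes "x \<in> h0t"
  shows "St x \<in> h0t"
proof -
  let ?U = "\<Union>w\<in>supp x. supp (Sw w)"
  have "supp (St x) \<subseteq> ?U"
    unfolding St_def by (rule supp_lin)
  moreover have "finite ?U" using assms finite_supp_Sw unfolding h0t_iff by blast
  moreover have "\<forall>p\<in>?U. adm p" using assms Sw_adm unfolding h0t_iff by blast
  ultimately show ?thesis unfolding h0t_iff by (meson finite_subset subsetD)
qed

lemma starT_lin: "starT x y = lin (\<lambda>w. lin (starw w) y) x"
  unfolding starT_def lin_def by (simp add: sum_distrib_left mult.assoc)

lemma starT_h0t:
  assumes "x \<in> h0t" "y \<in> h0t"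
  shows "starT x y \<in> h0t"
proof -
  let ?U = "\<Union>w\<in>supp x. \<Union>w'\<in>supp y. supp (starw w w')"
  have "supp (starT x y) \<subseteq> ?U"
    unfolding starT_lin using supp_lin[of "\<lambda>w. lin (starw w) y" x] supp_lin[of "starw _" y] by blast
  moreover have "finite ?U" using assms finite_supp_starw unfolding h0t_iff by blast
  moreover have "\<forall>p\<in>?U. adm p" using assms starw_adm unfolding h0t_iff by blast
  ultimately show ?thesis unfolding h0t_iff by (meson finite_subset subsetD)
qed


lemma lext_lmul:
  assumes "finite (supp q)"
  shows "lext g (lmul c q) = lext (\<lambda>w. g (c # w)) q"
  unfolding lmul_def using assms by (simp add: lext_lin)

lemma lext_circ:
  assumes "finite (supp q)"
  shows "lext g (circ c q) = lext (\<lambda>w. lext g (circw c w)) q"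
  unfolding circ_def using assms by (simp add: lext_lin finite_supp_circw)

lemma lext_Sw_cons:
  "lext g (Sw (c # w)) = lext g (lmul c (Sw w)) + tR * lext g (circ c (Sw w))"
  by (simp add: lext_addf lext_scal finite_supps finite_supp_Sw emb_tt)

lemma lext_starw_cons:
  "lext g (starw (a # w) (b # w')) =
     lext g (lmul a (starw w (b # w'))) + lext g (lmul b (starw (a # w) w'))
     + (1 - 2 * tR) * lext g (lmul (a + b) (starw w w'))
     + (tR ^ 2 - tR) * lext g (circ (a + b) (starw w w'))"
  by (simp add: lext_addf lext_scal finite_supps finite_supp_starw emb_coefficients)

lemma lext_vanish:
  assumes "finite (supp q)" "\<And>c w. g (c # w) = 0"
  shows "lext g (lmul c q) = 0" "lext g (circ c q) = 0"
proof -
  have "lext g (circw c w) = 0" for w by (cases w) (simp_all add: assms(2))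
  then show "lext g (lmul c q) = 0" "lext g (circ c q) = 0"
    using assms by (simp_all add: lext_lmul lext_circ)
qed

lemma lext_lmul_increment:
  assumes "finite (supp q)" "\<And>c w. g' (c # w) = g (c # w) + k c * h w"
  shows "lext g' (lmul c q) = lext g (lmul c q) + k c * lext h q"
  using assms by (simp add: lext_lmul lext_fun_linear)

lemma lext_circ_increment:
  assumes "finite (supp q)" "\<And>c w. g' (c # w) = g (c # w) + k c * h w" "g' [] = g []"
    and "\<And>c b. k (c + b) = k c * k b"
  shows "lext g' (circ c q) = lext g (circ c q) + k c * (lext g' q - lext g q)"
proof -
  have "lext g' (circw c w) = lext g (circw c w) + k c * (g' w - g w)" for w
    using assms(2-4) by (cases w) (simp_all add: algebra_simps)
  then show ?thesis
    using assms(1) by (simp add: lext_circ lext_fun_linear)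
qed


fun zeta_trunc :: "nat \<Rightarrow> nat list \<Rightarrow> real" where
  "zeta_trunc N [] = 1"
| "zeta_trunc 0 (a # w) = 0"
| "zeta_trunc (Suc N) (a # w) = zeta_trunc N (a # w) + (1 / real (Suc N)) ^ a * zeta_trunc N w"

definition trunc_weight :: "nat \<Rightarrow> nat \<Rightarrow> real poly" where
  "trunc_weight N c = [:(1 / real (Suc N)) ^ c:]"

lemma trunc_weight_add: "trunc_weight N (c + b) = trunc_weight N c * trunc_weight N b"
  by (simp add: trunc_weight_def power_add)

definition Zt_trunc :: "nat \<Rightarrow> nat list \<Rightarrow> real poly" where
  "Zt_trunc N u = lext (\<lambda>w. [:zeta_trunc N w:]) (Sw u)"

lemma Zt_trunc_Nil [simp]: "Zt_trunc N [] = 1"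
  by (simp add: Zt_trunc_def)

lemma Zt_trunc_0_cons: "Zt_trunc 0 (c # w) = 0"
  unfolding Zt_trunc_def lext_Sw_cons by (simp add: lext_vanish finite_supp_Sw)

text \<open>The recursion of zeta_trunc in N, transported through S^t.\<close>

lemma Zt_trunc_Suc_cons:
  "Zt_trunc (Suc N) (c # w) = Zt_trunc N (c # w)
     + trunc_weight N c * (Zt_trunc N w + tR * (Zt_trunc (Suc N) w - Zt_trunc N w))"
proof -
  have step: "[:zeta_trunc (Suc N) (c # w):] = [:zeta_trunc N (c # w):] + trunc_weight N c * [:zeta_trunc N w:]"
    for c w by (simp add: trunc_weight_def)
  have empty: "[:zeta_trunc (Suc N) []:] = [:zeta_trunc N []:]" by simp
  show ?thesis
    unfolding Zt_trunc_def lext_Sw_cons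
      lext_lmul_increment[where k = "trunc_weight N" and h = "\<lambda>w. [:zeta_trunc N w:]",
        OF finite_supp_Sw step]
      lext_circ_increment[where k = "trunc_weight N" and h = "\<lambda>w. [:zeta_trunc N w:]",
        OF finite_supp_Sw step empty trunc_weight_add]
    by (simp add: algebra_simps)
qed

text \<open>The ring identity behind one induction step of the truncated harmonic relation.\<close>

lemma harmonic_step_identity:
  fixes X Y A B A' B' X' Y' na nb T :: "'a :: comm_ring_1"
  assumes "X' = X + na * (A + T * (A' - A))" "Y' = Y + nb * (B + T * (B' - B))"
  shows "X * Y + na * (A * Y + T * (A' * Y' - A * Y)) + nb * (X * B + T * (X' * B' - X * B))
     + (1 - 2 * T) * (na * nb * (A * B + T * (A' * B' - A * B)))
     + (T ^ 2 - T) * (na * nb * (A' * B' - A * B)) = X' * Y'"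
  unfolding assms by (simp add: algebra_simps power2_eq_square)

theorem Zt_trunc_starw: "lext (Zt_trunc N) (starw u v) = Zt_trunc N u * Zt_trunc N v"
proof (induction N arbitrary: u v)
  case 0
  show ?case
  proof (induction u v rule: starw.induct)
    case (3 a w b w')
    show ?case
      unfolding lext_starw_cons by (simp add: lext_vanish finite_supp_starw Zt_trunc_0_cons)
  qed simp_all
next
  case (Suc N)
  let ?k = "trunc_weight N" and ?Z = "lext (Zt_trunc N)" and ?Z' = "lext (Zt_trunc (Suc N))"
  let ?h = "\<lambda>w. Zt_trunc N w + tR * (Zt_trunc (Suc N) w - Zt_trunc N w)"
  have step: "Zt_trunc (Suc N) (c # w) = Zt_trunc N (c # w) + ?k c * ?h w" for c w
    by (rule Zt_trunc_Suc_cons)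
  have empty: "Zt_trunc (Suc N) [] = Zt_trunc N []" by simp
  note lmul_inc = lext_lmul_increment[where k = ?k and h = ?h, OF finite_supp_starw step]
  note circ_inc = lext_circ_increment[where k = ?k and h = ?h,
      OF finite_supp_starw step empty trunc_weight_add]
  show ?case
  proof (induction u v rule: starw.induct)
    case (3 a w b w')
    let ?P1 = "starw w (b # w')" and ?P2 = "starw (a # w) w'" and ?P3 = "starw w w'"
    have "?Z' (starw (a # w) (b # w')) = ?Z (starw (a # w) (b # w'))
       + ?k a * (?Z ?P1 + tR * (?Z' ?P1 - ?Z ?P1))
       + ?k b * (?Z ?P2 + tR * (?Z' ?P2 - ?Z ?P2))
       + (1 - 2 * tR) * (?k a * ?k b * (?Z ?P3 + tR * (?Z' ?P3 - ?Z ?P3)))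
       + (tR ^ 2 - tR) * (?k a * ?k b * (?Z' ?P3 - ?Z ?P3))"
      unfolding lext_starw_cons[of "Zt_trunc (Suc N)"] lext_starw_cons[of "Zt_trunc N"]
        lmul_inc circ_inc trunc_weight_add lext_fun_linear
      by (simp add: algebra_simps)
    also have "\<dots> = Zt_trunc (Suc N) (a # w) * Zt_trunc (Suc N) (b # w')"
      unfolding Suc.IH 3 by (rule harmonic_step_identity) (simp_all add: Zt_trunc_Suc_cons)
    finally show ?case .
  qed simp_all
qed

lemma zeta_trunc_nonneg: "0 \<le> zeta_trunc N w"
  by (induction N w rule: zeta_trunc.induct) auto

lemma zeta_trunc_incseq: "incseq (\<lambda>N. zeta_trunc N w)"
  by (rule incseq_SucI) (cases w, auto intro!: mult_nonneg_nonneg zeta_trunc_nonneg)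

lemma zeta_trunc_letters_mono:
  "list_all2 (\<lambda>x y. y \<le> x) v w \<Longrightarrow> zeta_trunc N v \<le> zeta_trunc N w"
proof (induction N arbitrary: v w)
  case 0 then show ?case by (cases v; cases w) auto
next
  case (Suc N)
  show ?case
  proof (cases v)
    case Nil then show ?thesis using Suc.prems by simp
  next
    case (Cons a v')
    then obtain b w' where w: "w = b # w'" "b \<le> a" "list_all2 (\<lambda>x y. y \<le> x) v' w'"
      using Suc.prems by (cases w) auto
    have "(1 / real (Suc N)) ^ a \<le> (1 / real (Suc N)) ^ b"
      by (rule power_decreasing) (auto simp: w)
    then have "(1 / real (Suc N)) ^ a * zeta_trunc N v' \<le> (1 / real (Suc N)) ^ b * zeta_trunc N w'"
      using Suc.IH[OF w(3)] by (intro mult_mono) (auto simp: zeta_trunc_nonneg)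
    moreover have "zeta_trunc N (a # v') \<le> zeta_trunc N (b # w')"
      using Suc.IH[of "a # v'" "b # w'"] w by simp
    ultimately show ?thesis using Cons w by simp
  qed
qed

text \<open>The telescoping estimate zeta_N(2,1,r) + zeta_N(1,r)/N <= zeta_N(2,r), which
  lets a letter 1 after a leading 2 be absorbed.\<close>

lemma zeta_trunc_absorb_one:
  "zeta_trunc N (2 # 1 # r) + (1 / real N) * zeta_trunc N (1 # r) \<le> zeta_trunc N (2 # r)"
proof (induction N)
  case 0 then show ?case by simp
next
  case (Suc N)
  define x where "x = 1 / real (Suc N)"
  define X where "X = zeta_trunc N (1 # r)"
  have X0: "0 \<le> X" by (simp add: X_def zeta_trunc_nonneg)
  have key: "x ^ 2 * X + x * X \<le> (1 / real N) * X"
  proof (cases "N = 0")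
    case True then show ?thesis by (simp add: X_def)
  next
    case False
    have "x ^ 2 = 1 / (real (Suc N) * real (Suc N))" by (simp add: x_def power2_eq_square)
    also have "\<dots> \<le> 1 / (real N * real (Suc N))"
      using False by (intro divide_left_mono mult_right_mono) auto
    also have "\<dots> = 1 / real N - x" using False by (simp add: x_def field_simps)
    finally have "x ^ 2 + x \<le> 1 / real N" by simp
    then have "(x ^ 2 + x) * X \<le> (1 / real N) * X" using X0 by (rule mult_right_mono)
    then show ?thesis by (simp add: algebra_simps)
  qed
  have "zeta_trunc (Suc N) (2 # 1 # r) + (1 / real (Suc N)) * zeta_trunc (Suc N) (1 # r)
      = zeta_trunc N (2 # 1 # r) + x ^ 2 * X + x * (X + x * zeta_trunc N r)"
    by (simp add: x_def X_def)
  also have "\<dots> \<le> zeta_trunc N (2 # r) + x ^ 2 * zeta_trunc N r"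
    using Suc.IH key unfolding x_def X_def by (simp add: algebra_simps power2_eq_square)
  also have "\<dots> = zeta_trunc (Suc N) (2 # r)" by (simp add: x_def)
  finally show ?case .
qed

text \<open>Telescoping bound zeta_N(2) + 1/N <= 2, using 1/(N+1)^2 <= 1/N - 1/(N+1).\<close>

lemma zeta_trunc_two: "zeta_trunc N [2] + 1 / real N \<le> 2"
proof (induction N)
  case 0 then show ?case by simp
next
  case (Suc N)
  show ?case
  proof (cases "N = 0")
    case False
    have "(1 / real (Suc N)) ^ 2 \<le> 1 / (real N * real (Suc N))"
      using False by (simp add: power2_eq_square divide_le_cancel frac_le)
    also have "\<dots> = 1 / real N - 1 / real (Suc N)" using False by (simp add: field_simps)
    finally show ?thesis using Suc.IH by simp
  qed simp
qed

text \<open>Hence zeta_N(2,1,...,1) <= 2, the largest admissible case after comparison.\<close>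

lemma zeta_trunc_two_ones: "zeta_trunc N (2 # replicate n 1) \<le> 2"
proof (induction n)
  case 0
  have "0 \<le> 1 / real N" by simp
  with zeta_trunc_two[of N] have "zeta_trunc N [2] \<le> 2" by linarith
  then show ?case by simp
next
  case (Suc n)
  have "0 \<le> (1 / real N) * zeta_trunc N (1 # replicate n 1)"
    by (simp add: zeta_trunc_nonneg)
  then have "zeta_trunc N (2 # 1 # replicate n 1) \<le> zeta_trunc N (2 # replicate n 1)"
    using zeta_trunc_absorb_one[of N "replicate n 1"] by linarith
  then show ?case using Suc by simp
qed

lemma zeta_trunc_bound:
  assumes "adm w"
  shows "zeta_trunc N w \<le> 2"
proof (cases w)
  case (Cons c u)
  then have "list_all2 (\<lambda>x y. y \<le> x) w (2 # replicate (length u) 1)"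
    using assms by (auto simp: adm_def pos_letters_def list_all2_conv_all_nth nth_Cons split: nat.splits)
  then show ?thesis using zeta_trunc_letters_mono zeta_trunc_two_ones by (metis order_trans)
qed simp


text \<open>zeta_trunc N is the partial sum of the series defining mzv over the index
  tuples bounded by N; since these exhaust all index tuples and the terms are
  nonnegative, the bounded increasing sequence zeta_trunc N converges to mzv.\<close>

definition mzv_indices :: "nat list \<Rightarrow> nat list set" where
  "mzv_indices k = {ms. length ms = length k \<and> sorted_wrt (>) ms \<and> (\<forall>m\<in>set ms. 0 < m)}"

definition mzv_indices_upto :: "nat \<Rightarrow> nat list \<Rightarrow> nat list set" where
  "mzv_indices_upto N k = {ms \<in> mzv_indices k. \<forall>m\<in>set ms. m \<le> N}"

definition mzv_term :: "nat list \<Rightarrow> nat list \<Rightarrow> real" where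
  "mzv_term k ms = (\<Prod>i<length k. 1 / (real (ms ! i) ^ (k ! i)))"

lemma mzv_as_infsum: "mzv k = infsum (mzv_term k) (mzv_indices k)"
  by (simp add: mzv_def mzv_term_def[abs_def] mzv_indices_def)

lemma mzv_term_nonneg: "0 \<le> mzv_term k ms"
  by (simp add: mzv_term_def prod_nonneg)

lemma mzv_term_cons: "mzv_term (a # w) (m # ms) = (1 / real m) ^ a * mzv_term w ms"
  unfolding mzv_term_def length_Cons prod.lessThan_Suc_shift by (simp add: power_one_over)

lemma finite_mzv_indices_upto: "finite (mzv_indices_upto N k)"
proof (rule finite_subset)
  show "mzv_indices_upto N k \<subseteq> {xs. set xs \<subseteq> {0..N} \<and> length xs = length k}"
    by (auto simp: mzv_indices_upto_def mzv_indices_def)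
  show "finite {xs. set xs \<subseteq> {0..N} \<and> length xs = length k}"
    by (rule finite_lists_length_eq) simp
qed

lemma mzv_indices_upto_Suc:
  "mzv_indices_upto (Suc N) (a # w) = mzv_indices_upto N (a # w) \<union> Cons (Suc N) ` mzv_indices_upto N w"
proof (rule set_eqI, rule iffI)
  fix ms assume "ms \<in> mzv_indices_upto (Suc N) (a # w)"
  then obtain m ms' where ms: "ms = m # ms'" "length ms' = length w" "\<forall>y\<in>set ms'. y < m"
     "sorted_wrt (>) ms'" "0 < m" "\<forall>y\<in>set ms'. 0 < y" "m \<le> Suc N" "\<forall>y\<in>set ms'. y \<le> Suc N"
    by (auto simp: mzv_indices_upto_def mzv_indices_def length_Suc_conv)
  show "ms \<in> mzv_indices_upto N (a # w) \<union> Cons (Suc N) ` mzv_indices_upto N w"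
  proof (cases "m = Suc N")
    case True
    then have "ms' \<in> mzv_indices_upto N w" using ms by (auto simp: mzv_indices_upto_def mzv_indices_def)
    then show ?thesis using True ms by auto
  next
    case False
    then have "ms \<in> mzv_indices_upto N (a # w)"
      using ms by (fastforce simp: mzv_indices_upto_def mzv_indices_def)
    then show ?thesis by auto
  qed
next
  fix ms assume "ms \<in> mzv_indices_upto N (a # w) \<union> Cons (Suc N) ` mzv_indices_upto N w"
  then show "ms \<in> mzv_indices_upto (Suc N) (a # w)"
    by (force simp: mzv_indices_upto_def mzv_indices_def le_imp_less_Suc intro: le_SucI)
qed

lemma zeta_trunc_eq_sum: "zeta_trunc N k = sum (mzv_term k) (mzv_indices_upto N k)"
proof (induction N k rule: zeta_trunc.induct)
  case (1 N)
  have "mzv_indices_upto N [] = {[]}" by (auto simp: mzv_indices_upto_def mzv_indices_def)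
  then show ?case by (simp add: mzv_term_def)
next
  case (2 a w)
  have "mzv_indices_upto 0 (a # w) = {}"
    by (auto simp: mzv_indices_upto_def mzv_indices_def length_Suc_conv)
  then show ?case by simp
next
  case (3 N a w)
  have disj: "mzv_indices_upto N (a # w) \<inter> Cons (Suc N) ` mzv_indices_upto N w = {}"
    by (auto simp: mzv_indices_upto_def)
  have "sum (mzv_term (a # w)) (Cons (Suc N) ` mzv_indices_upto N w)
      = (\<Sum>ms\<in>mzv_indices_upto N w. mzv_term (a # w) (Suc N # ms))"
    by (rule sum.reindex[unfolded comp_def]) (auto simp: inj_on_def)
  also have "\<dots> = (1 / real (Suc N)) ^ a * zeta_trunc N w"
    by (simp add: mzv_term_cons sum_distrib_left 3)
  finally show ?case
    unfolding mzv_indices_upto_Suc using 3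
    by (subst sum.union_disjoint) (auto simp: finite_mzv_indices_upto disj)
qed

lemma finite_subset_mzv_indices_upto:
  assumes "finite F" "F \<subseteq> mzv_indices k"
  shows "\<exists>N. F \<subseteq> mzv_indices_upto N k"
proof -
  let ?N = "\<Sum>ms\<in>F. sum_list ms"
  have "m \<le> ?N" if "ms \<in> F" "m \<in> set ms" for ms m
    using member_le_sum_list[OF that(2)] member_le_sum[OF that(1) _ assms(1), of sum_list] by simp
  then have "F \<subseteq> mzv_indices_upto ?N k"
    using assms(2) by (auto simp: mzv_indices_upto_def)
  then show ?thesis by blast
qed

theorem zeta_trunc_tendsto:
  assumes "adm k"
  shows "(\<lambda>N. zeta_trunc N k) \<longlonglongrightarrow> mzv k"
proof -
  obtain L where L: "(\<lambda>N. zeta_trunc N k) \<longlonglongrightarrow> L" "\<forall>N. zeta_trunc N k \<le> L"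
    using incseq_convergent[OF zeta_trunc_incseq] zeta_trunc_bound[OF assms] by blast
  have finite_sums: "sum (mzv_term k) F \<le> L" if F: "finite F" "F \<subseteq> mzv_indices k" for F
  proof -
    obtain N where "F \<subseteq> mzv_indices_upto N k" using finite_subset_mzv_indices_upto[OF F] by blast
    then have "sum (mzv_term k) F \<le> zeta_trunc N k"
      unfolding zeta_trunc_eq_sum
      by (intro sum_mono2 finite_mzv_indices_upto) (auto simp: mzv_term_nonneg)
    then show ?thesis using L(2) by (meson order_trans)
  qed
  have summable: "mzv_term k summable_on mzv_indices k"
    by (rule nonneg_bdd_above_summable_on)
      (auto simp: mzv_term_nonneg bdd_above_def intro!: exI[of _ L] finite_sums)
  have "zeta_trunc N k \<le> mzv k" for N
    unfolding zeta_trunc_eq_sum mzv_as_infsum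
    by (rule finite_sum_le_infsum[OF summable finite_mzv_indices_upto])
      (auto simp: mzv_indices_upto_def mzv_term_nonneg)
  then have "L \<le> mzv k"
    by (intro LIMSEQ_le_const2[OF L(1)]) auto
  moreover have "mzv k \<le> L"
    unfolding mzv_as_infsum by (rule infsum_le_finite_sums[OF summable finite_sums])
  ultimately show ?thesis using L(1) by simp
qed

definition Zt_word :: "nat list \<Rightarrow> real poly" where
  "Zt_word u = lext (\<lambda>w. [:mzv w:]) (Sw u)"

lemma Z_lext: "Z x = lext (\<lambda>w. [:mzv w:]) x"
  unfolding Z_def lext_def emb_def by (simp add: mult.commute)

lemma Zt_lext: "finite (supp x) \<Longrightarrow> Zt x = lext Zt_word x"
  unfolding Zt_def Z_lext St_def Zt_word_def by (simp add: lext_lin finite_supp_Sw)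

lemma lext_tendsto:
  assumes "\<And>w. w \<in> supp x \<Longrightarrow> (\<lambda>N. poly (g N w) s) \<longlonglongrightarrow> poly (g' w) s"
  shows "(\<lambda>N. poly (lext (g N) x) s) \<longlonglongrightarrow> poly (lext g' x) s"
  unfolding lext_def poly_sum poly_mult by (intro tendsto_sum tendsto_mult_left assms)

lemma Zt_trunc_tendsto:
  assumes "adm u"
  shows "(\<lambda>N. poly (Zt_trunc N u) s) \<longlonglongrightarrow> poly (Zt_word u) s"
  unfolding Zt_trunc_def Zt_word_def
  by (rule lext_tendsto) (simp add: zeta_trunc_tendsto Sw_adm[OF assms])

theorem Zt_word_starw:
  assumes "adm u" "adm v"
  shows "lext Zt_word (starw u v) = Zt_word u * Zt_word v"
proof -
  have "poly (lext Zt_word (starw u v)) s = poly (Zt_word u * Zt_word v) s" for s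
  proof -
    have "(\<lambda>N. poly (lext (Zt_trunc N) (starw u v)) s) \<longlonglongrightarrow> poly (lext Zt_word (starw u v)) s"
      by (rule lext_tendsto) (rule Zt_trunc_tendsto, rule starw_adm[OF assms])
    moreover have "(\<lambda>N. poly (lext (Zt_trunc N) (starw u v)) s) \<longlonglongrightarrow> poly (Zt_word u) s * poly (Zt_word v) s"
      unfolding Zt_trunc_starw poly_mult by (intro tendsto_mult Zt_trunc_tendsto assms)
    ultimately show ?thesis by (simp add: LIMSEQ_unique)
  qed
  then show ?thesis by (simp add: poly_eq_poly_eq_iff[symmetric] fun_eq_iff)
qed

lemma Zt_starT:
  assumes "x \<in> h0t" "y \<in> h0t"
  shows "Zt (starT x y) = Zt x * Zt y"
proof -
  have fx: "finite (supp x)" "\<forall>w\<in>supp x. adm w" and fy: "finite (supp y)" "\<forall>w\<in>supp y. adm w"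
    using assms by (auto simp: h0t_iff)
  have row: "lext Zt_word (lin (starw w) y) = Zt_word w * Zt y" if "w \<in> supp x" for w
  proof -
    have "lext Zt_word (lin (starw w) y) = lext (\<lambda>w'. lext Zt_word (starw w w')) y"
      using fy by (simp add: lext_lin finite_supp_starw)
    also have "\<dots> = lext (\<lambda>w'. Zt_word w * Zt_word w') y"
      using fx fy that by (intro lext_cong) (simp add: Zt_word_starw)
    finally show ?thesis using fy by (simp add: lext_fun_mult Zt_lext)
  qed
  have "Zt (starT x y) = lext Zt_word (lin (\<lambda>w. lin (starw w) y) x)"
    using starT_h0t[OF assms] by (simp add: Zt_lext h0t_iff starT_lin)
  also have "\<dots> = lext (\<lambda>w. Zt_word w * Zt y) x"
    using fx fy row by (simp add: lext_lin finite_supp_lin finite_supp_starw cong: lext_cong)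
  also have "\<dots> = Zt x * Zt y"
    using fx lext_fun_mult[of "Zt y" Zt_word x] by (simp add: Zt_lext mult.commute)
  finally show ?thesis .
qed

lemma mzv_Nil: "mzv [] = 1"
  using zeta_trunc_tendsto[of "[]"] by (simp add: adm_def pos_letters_def LIMSEQ_const_iff)

theorem mainTheorem8:
  shows "(\<forall>x\<in>h0t. \<forall>y\<in>h0t. starT x y \<in> h0t)
    \<and> (\<forall>x\<in>h0t. St x \<in> h0t)
    \<and> Zt (wd []) = 1
    \<and> (\<forall>x\<in>h0t. \<forall>y\<in>h0t. Zt (addf x y) = Zt x + Zt y)
    \<and> (\<forall>c. \<forall>x\<in>h0t. Zt (scal c x) = map_poly of_rat c * Zt x)
    \<and> (\<forall>x\<in>h0t. \<forall>y\<in>h0t. Zt (starT x y) = Zt x * Zt y)"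
proof (intro conjI ballI allI)
  show "Zt (wd []) = 1"
    by (simp add: Zt_lext Zt_word_def mzv_Nil)
next
  fix x y assume "x \<in> h0t" "y \<in> h0t"
  then have "finite (supp x)" "finite (supp y)" by (auto simp: h0t_iff)
  then show "Zt (addf x y) = Zt x + Zt y"
    by (simp add: Zt_lext lext_addf finite_supp_addf)
next
  fix c x assume "x \<in> h0t"
  then have "finite (supp x)" by (auto simp: h0t_iff)
  then show "Zt (scal c x) = map_poly of_rat c * Zt x"
    by (simp add: Zt_lext lext_scal finite_supp_scal emb_def)
qed (simp_all add: starT_h0t St_h0t Zt_starT)

end
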